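(* Let $p\in[1,\infty]$ and let $(X,d,\mu)$ be a metric measure space which is $p$-thick quasiconvex with constant $C\ge1$. Then $d_p$ is a metric on $X$ and $d\le d_p\le Cd$.
   Context: A metric measure space is a proper metric space with a Borel regular outer measure positive and finite on balls. $\operatorname{Mod}_p\Gamma=\inf\int\rho^pd\mu$ (for $p<\infty$), $\operatorname{Mod}_\infty\Gamma=\inf\|\rho\|_{L^\infty}$, over Borel $\rho\ge0$ with $\int_\gamma\rho\ge1$ on $\Gamma$. $\Gamma(E,F;C)$ is the family of curves $\gamma:[0,1]\to X$ with $\gamma(0)\in E,\gamma(1)\in F,\ell(\gamma)\le Cd(\gamma(0),\gamma(1))$; $X$ is $p$-thick quasiconvex with constant $C$ if $\operatorname{Mod}_p\Gamma(E,F;C)>0$ for all measurable $E,F$ of positive measure. With $\Gamma(E,F)$ the Lipschitz curves $[0,1]\to X$ from $E$ to $F$, set $ess\ell_p(\Gamma):=\sup_{\operatorname{Mod}_p\Gamma_0=0}\inf\{\ell(\gamma):\gamma\in\Gamma\setminus\Gamma_0\}$ ($\inf\emptyset=\infty$), $d_p'(x,y):=\lim_{\delta\to0}ess\ell_p\Gamma(\bar B(x,\delta),\bar B(y,\delta))$, and $d_p(x,y):=\inf\{\sum_{i=1}^nd_p'(x_{i-1},x_i):n\in\mathbb N,x_0=x,x_n=y\}$. *)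

theory Defs
  imports "HOL-Analysis.Analysis" "HOL-Probability.Essential_Supremum"
begin

text \<open>Curves are maps real to X, considered on the parameter interval [0,1].\<close>

definition length_on :: "(real \<Rightarrow> 'a::metric_space) \<Rightarrow> real \<Rightarrow> real \<Rightarrow> ennreal" where
  "length_on \<gamma> a b =
     (SUP ts \<in> {ts. sorted ts \<and> set ts \<subseteq> {a..b}}.
        (\<Sum>i < length ts - 1. ennreal (dist (\<gamma> (ts ! i)) (\<gamma> (ts ! Suc i)))))"

definition curve_length :: "(real \<Rightarrow> 'a::metric_space) \<Rightarrow> ennreal" where
  "curve_length \<gamma> = length_on \<gamma> 0 1"

definition length_fun :: "(real \<Rightarrow> 'a::metric_space) \<Rightarrow> real \<Rightarrow> real" where
  "length_fun \<gamma> t = enn2real (length_on \<gamma> 0 (max 0 (min 1 t)))"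

text \<open>Line integral of a Borel function along a (rectifiable) curve, as the
  Lebesgue--Stieltjes integral with respect to arc length ds.\<close>
definition line_integral :: "('a::metric_space \<Rightarrow> ennreal) \<Rightarrow> (real \<Rightarrow> 'a) \<Rightarrow> ennreal" where
  "line_integral \<rho> \<gamma> = (\<integral>\<^sup>+ t. \<rho> (\<gamma> t) \<partial>(interval_measure (length_fun \<gamma>)))"

definition admissible :: "(real \<Rightarrow> 'a::metric_space) set \<Rightarrow> ('a \<Rightarrow> ennreal) \<Rightarrow> bool" where
  "admissible \<Gamma> \<rho> \<longleftrightarrow> \<rho> \<in> borel_measurable borel \<and> (\<forall>\<gamma>\<in>\<Gamma>. 1 \<le> line_integral \<rho> \<gamma>)"

definition ennpow :: "ennreal \<Rightarrow> real \<Rightarrow> ennreal" where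
  "ennpow x q = (if x = \<infinity> then \<infinity> else ennreal (enn2real x powr q))"

definition Mod :: "'a::metric_space measure \<Rightarrow> ennreal \<Rightarrow> (real \<Rightarrow> 'a) set \<Rightarrow> ennreal" where
  "Mod \<mu> p \<Gamma> =
     (if p = \<infinity> then (INF \<rho> \<in> {\<rho>. admissible \<Gamma> \<rho>}. esssup \<mu> \<rho>)
      else (INF \<rho> \<in> {\<rho>. admissible \<Gamma> \<rho>}. \<integral>\<^sup>+ x. ennpow (\<rho> x) (enn2real p) \<partial>\<mu>))"

definition curvesC :: "'a::metric_space set \<Rightarrow> 'a set \<Rightarrow> real \<Rightarrow> (real \<Rightarrow> 'a) set" where
  "curvesC E F C = {\<gamma>. continuous_on {0..1} \<gamma> \<and> \<gamma> 0 \<in> E \<and> \<gamma> 1 \<in> F \<and>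
                        curve_length \<gamma> \<le> ennreal (C * dist (\<gamma> 0) (\<gamma> 1))}"

definition thick_quasiconvex :: "'a::metric_space measure \<Rightarrow> ennreal \<Rightarrow> real \<Rightarrow> bool" where
  "thick_quasiconvex \<mu> p C \<longleftrightarrow>
     (\<forall>E F. E \<in> sets (completion \<mu>) \<longrightarrow> F \<in> sets (completion \<mu>) \<longrightarrow>
        0 < emeasure (completion \<mu>) E \<longrightarrow> 0 < emeasure (completion \<mu>) F \<longrightarrow>
        0 < Mod \<mu> p (curvesC E F C))"

definition lip_curves :: "'a::metric_space set \<Rightarrow> 'a set \<Rightarrow> (real \<Rightarrow> 'a) set" where
  "lip_curves E F = {\<gamma>. (\<exists>L. L-lipschitz_on {0..1} \<gamma>) \<and> \<gamma> 0 \<in> E \<and> \<gamma> 1 \<in> F}"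

definition ess_length :: "'a::metric_space measure \<Rightarrow> ennreal \<Rightarrow> (real \<Rightarrow> 'a) set \<Rightarrow> ennreal" where
  "ess_length \<mu> p \<Gamma> =
     (SUP \<Gamma>0 \<in> {\<Gamma>0. Mod \<mu> p \<Gamma>0 = 0}. INF \<gamma> \<in> \<Gamma> - \<Gamma>0. curve_length \<gamma>)"

definition dp' :: "'a::metric_space measure \<Rightarrow> ennreal \<Rightarrow> 'a \<Rightarrow> 'a \<Rightarrow> ennreal" where
  "dp' \<mu> p x y = Lim (at_right (0::real)) (\<lambda>\<delta>. ess_length \<mu> p (lip_curves (cball x \<delta>) (cball y \<delta>)))"

definition dp :: "'a::metric_space measure \<Rightarrow> ennreal \<Rightarrow> 'a \<Rightarrow> 'a \<Rightarrow> ennreal" where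
  "dp \<mu> p x y =
     (INF xs \<in> {xs. 2 \<le> length xs \<and> hd xs = x \<and> last xs = y}.
        (\<Sum>i < length xs - 1. dp' \<mu> p (xs ! i) (xs ! Suc i)))"

end

theory Submission
  imports Defs "HOL-Probability.Distribution_Functions"
begin

text \<open>
  \<open>d\<^sub>p\<close> is the infimum of sums of \<open>d\<^sub>p'\<close> along finite chains, so it is a finite metric
  between \<open>d\<close> and \<open>C d\<close> as soon as \<open>d\<^sub>p'\<close> is symmetric and \<open>d \<le> d\<^sub>p' \<le> C d\<close>.
  The lower bound holds because every curve joining the closed \<open>\<delta>\<close>-balls around \<open>x\<close> and \<open>y\<close>
  is at least \<open>d(x,y) - 2\<delta>\<close> long. For the upper bound, if the Lipschitz curves joining these
  balls with length at most \<open>C (d(x,y) + 2\<delta>)\<close> formed a family of \<open>p\<close>-modulus zero, then so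
  would \<open>\<Gamma>(B(x,\<delta>), B(y,\<delta>); C)\<close>, contradicting thickness: each of its curves has an
  arc-length reparametrization, which is such a Lipschitz curve with the same line integrals.
  \<open>d\<^sub>p'\<close> is symmetric because reversing a curve preserves length and line integrals, hence
  families of modulus zero. Both invariances come from rewriting the line integral as a
  Lebesgue integral over \<open>[0, \<ell>(\<gamma>)]\<close>: the push-forward of \<open>ds\<close> under the continuous length
  function is Lebesgue measure on that interval.
\<close>

section \<open>Sums along chains\<close>

fun chain_sum :: "('b \<Rightarrow> 'b \<Rightarrow> ennreal) \<Rightarrow> 'b list \<Rightarrow> ennreal" where
  "chain_sum f (a # b # xs) = f a b + chain_sum f (b # xs)"
| "chain_sum f _ = 0"

lemma sum_consecutive_eq_chain_sum:
  "(\<Sum>i < length xs - 1. f (xs ! i) (xs ! Suc i)) = chain_sum f xs"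
proof (induction f xs rule: chain_sum.induct)
  case (1 f a b xs)
  have "(\<Sum>i < length (a # b # xs) - 1. f ((a # b # xs) ! i) ((a # b # xs) ! Suc i))
      = f a b + (\<Sum>i < length (b # xs) - 1. f ((b # xs) ! i) ((b # xs) ! Suc i))"
    by (simp add: sum.lessThan_Suc_shift del: sum.lessThan_Suc)
  then show ?case using 1 by simp
qed auto

lemma chain_sum_append:
  "xs \<noteq> [] \<Longrightarrow> ys \<noteq> [] \<Longrightarrow>
    chain_sum f (xs @ ys) = chain_sum f xs + f (last xs) (hd ys) + chain_sum f ys"
proof (induction xs rule: induct_list012)
  case (2 x)
  then show ?case by (cases ys) auto
qed (auto simp: add_ac)

lemma chain_sum_append_tl:
  assumes "xs \<noteq> []" "ys \<noteq> []" "last xs = hd ys"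
  shows "chain_sum f (xs @ tl ys) = chain_sum f xs + chain_sum f ys"
  using assms by (cases ys; cases "tl ys") (auto simp: chain_sum_append)

lemma chain_sum_rev: "chain_sum f (rev xs) = chain_sum (\<lambda>a b. f b a) xs"
proof (induction xs rule: induct_list012)
  case (3 x y zs)
  have "chain_sum f (rev (x # y # zs)) = chain_sum f (rev (y # zs)) + f y x"
    using chain_sum_append[of "rev (y # zs)" "[x]" f] by (simp add: last_rev)
  then show ?case using 3 by (simp add: add_ac)
qed auto

lemma chain_sum_map: "chain_sum f (map g xs) = chain_sum (\<lambda>a b. f (g a) (g b)) xs"
  by (induction xs rule: induct_list012) auto

lemma chain_sum_cong:
  "(\<And>a b. a \<in> set xs \<Longrightarrow> b \<in> set xs \<Longrightarrow> f a b = g a b) \<Longrightarrow> chain_sum f xs = chain_sum g xs"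
  by (induction f xs rule: chain_sum.induct) auto

lemma chain_sum_const:
  "(\<And>a. f a a = 0) \<Longrightarrow> (\<And>t. t \<in> set xs \<Longrightarrow> t = c) \<Longrightarrow> chain_sum f xs = 0"
  by (induction f xs rule: chain_sum.induct) auto

lemma chain_sum_Cons_ge: "chain_sum f xs \<le> chain_sum f (x # xs)"
  by (cases xs) auto

lemma chain_sum_insert_le:
  assumes triangle: "\<And>a b c. f a c \<le> f a b + f b c"
  shows "chain_sum f (xs @ ys) \<le> chain_sum f (xs @ [b]) + chain_sum f (b # ys)"
proof (cases "xs = []")
  case True
  then show ?thesis using chain_sum_Cons_ge[of f ys b] by (simp add: add_increasing)
next
  case xs: False
  show ?thesis
  proof (cases "ys = []")
    case True
    then show ?thesis using xs by (simp add: chain_sum_append add_increasing2)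
  next
    case False
    have "chain_sum f (xs @ ys) = chain_sum f xs + f (last xs) (hd ys) + chain_sum f ys"
      using xs False by (rule chain_sum_append)
    also have "\<dots> \<le> chain_sum f xs + (f (last xs) b + f b (hd ys)) + chain_sum f ys"
      by (intro add_mono order_refl triangle)
    also have "\<dots> = chain_sum f (xs @ [b]) + chain_sum f (b # ys)"
      using xs False by (cases ys) (auto simp: chain_sum_append add_ac)
    finally show ?thesis .
  qed
qed

lemma triangle_le_chain_sum:
  assumes refl: "\<And>a. d a a = 0" and triangle: "\<And>a b c. d a c \<le> d a b + d b c"
    and le: "\<And>a b. d a b \<le> f a b"
  shows "xs \<noteq> [] \<Longrightarrow> d (hd xs) (last xs) \<le> chain_sum f xs"
proof (induction xs rule: induct_list012)
  case (3 a b xs)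
  have "d a (last (b # xs)) \<le> d a b + d b (last (b # xs))" by (rule triangle)
  also have "\<dots> \<le> f a b + chain_sum f (b # xs)"
    using le 3 by (intro add_mono) auto
  finally show ?case by simp
qed (auto simp: refl)

definition chains :: "'a \<Rightarrow> 'a \<Rightarrow> 'a list set" where
  "chains x y = {xs. 2 \<le> length xs \<and> hd xs = x \<and> last xs = y}"

definition chain_inf :: "('a \<Rightarrow> 'a \<Rightarrow> ennreal) \<Rightarrow> 'a \<Rightarrow> 'a \<Rightarrow> ennreal" where
  "chain_inf f x y = (INF xs \<in> chains x y. chain_sum f xs)"

lemma chain_inf_le: "chain_inf f x y \<le> f x y"
proof -
  have "[x, y] \<in> chains x y" by (simp add: chains_def)
  then show ?thesis unfolding chain_inf_def by (rule INF_lower2) simp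
qed

lemma chain_inf_commute:
  assumes "\<And>a b. f a b = f b a"
  shows "chain_inf f x y = chain_inf f y x"
proof -
  have "chain_sum f ` chains x y = chain_sum f ` chains y x"
  proof -
    have "chain_sum f xs = chain_sum f (rev xs)" for xs
      by (simp add: chain_sum_rev assms)
    moreover have "chains y x = rev ` chains x y"
      by (force simp: chains_def hd_rev last_rev image_iff intro: exI[of _ "rev _"])
    ultimately show ?thesis by (auto simp: image_image)
  qed
  then show ?thesis by (simp add: chain_inf_def)
qed

lemma chain_inf_triangle: "chain_inf f x z \<le> chain_inf f x y + chain_inf f y z"
proof (rule ennreal_le_epsilon)
  fix \<epsilon> :: real assume fin: "chain_inf f x y + chain_inf f y z < top" and \<epsilon>: "0 < \<epsilon>"
  have "chain_inf f x y \<noteq> \<infinity>" "chain_inf f y z \<noteq> \<infinity>" using fin by (auto simp: top_unique)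
  then obtain xs ys where
    xs: "xs \<in> chains x y" "chain_sum f xs < chain_inf f x y + ennreal (\<epsilon> / 2)" and
    ys: "ys \<in> chains y z" "chain_sum f ys < chain_inf f y z + ennreal (\<epsilon> / 2)"
    using INF_approx_ennreal[OF _ chain_inf_def, of "\<epsilon> / 2"] \<epsilon> by (metis half_gt_zero)
  have "xs @ tl ys \<in> chains x z"
    using xs(1) ys(1) by (cases xs; cases ys) (auto simp: chains_def)
  then have "chain_inf f x z \<le> chain_sum f (xs @ tl ys)"
    unfolding chain_inf_def by (rule INF_lower)
  also have "\<dots> = chain_sum f xs + chain_sum f ys"
    using xs(1) ys(1) by (intro chain_sum_append_tl) (auto simp: chains_def)
  also have "\<dots> \<le> (chain_inf f x y + ennreal (\<epsilon> / 2)) + (chain_inf f y z + ennreal (\<epsilon> / 2))"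
    using xs(2) ys(2) by (intro add_mono) auto
  also have "\<dots> = chain_inf f x y + chain_inf f y z + ennreal \<epsilon>"
    using \<epsilon> by (simp add: ac_simps ennreal_plus[symmetric] del: ennreal_plus)
  finally show "chain_inf f x z \<le> chain_inf f x y + chain_inf f y z + ennreal \<epsilon>" .
qed

lemma ennreal_dist_triangle:
  "ennreal (dist a c) \<le> ennreal (dist a b) + ennreal (dist b c)"
  by (metis dist_triangle ennreal_leI ennreal_plus zero_le_dist)

lemma dist_le_chain_inf:
  assumes "\<And>a b. ennreal (dist a b) \<le> f a b"
  shows "ennreal (dist x y) \<le> chain_inf f x y"
  unfolding chain_inf_def
proof (rule INF_greatest)
  fix xs assume xs: "xs \<in> chains x y"
  then have "xs \<noteq> []" by (auto simp: chains_def)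
  from triangle_le_chain_sum[OF _ ennreal_dist_triangle assms this]
  show "ennreal (dist x y) \<le> chain_sum f xs" using xs by (simp add: chains_def)
qed

lemma Metric_space_enn2real:
  fixes d :: "'a \<Rightarrow> 'a \<Rightarrow> ennreal"
  assumes finite: "\<And>x y. d x y \<noteq> \<infinity>" and zero: "\<And>x y. d x y = 0 \<longleftrightarrow> x = y"
    and commute: "\<And>x y. d x y = d y x" and triangle: "\<And>x y z. d x z \<le> d x y + d y z"
  shows "Metric_space UNIV (\<lambda>x y. enn2real (d x y))"
proof
  fix x y z
  show "0 \<le> enn2real (d x y)" by simp
  show "enn2real (d x y) = enn2real (d y x)" by (simp add: commute)
  show "enn2real (d x y) = 0 \<longleftrightarrow> x = y" using finite[of x y] zero[of x y] by (simp add: enn2real_eq_0_iff)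
  have "enn2real (d x z) \<le> enn2real (d x y + d y z)"
    using triangle[of x z y] finite[of x y] finite[of y z]
    by (intro enn2real_mono) (auto simp: less_top[symmetric])
  then show "enn2real (d x z) \<le> enn2real (d x y) + enn2real (d y z)"
    using finite[of x y] finite[of y z] by (simp add: enn2real_plus less_top[symmetric])
qed

section \<open>Length of curves\<close>

lemma sorted_split_at:
  fixes ts :: "'a::linorder list"
  assumes "sorted ts"
  obtains xs ys where "ts = xs @ ys" "\<forall>x\<in>set xs. x \<le> b" "\<forall>y\<in>set ys. b < y"
  using assms
proof (induction ts arbitrary: thesis)
  case (Cons t ts)
  show ?case
  proof (cases "t \<le> b")
    case True
    obtain xs ys where "ts = xs @ ys" "\<forall>x\<in>set xs. x \<le> b" "\<forall>y\<in>set ys. b < y"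
      using Cons.IH Cons.prems(2) by auto
    then show ?thesis using True by (intro Cons.prems(1)[of "t # xs" ys]) auto
  next
    case False
    then show ?thesis using Cons.prems by (intro Cons.prems(1)[of "[]" "t # ts"]) auto
  qed
qed simp

abbreviation inscribed_length :: "(real \<Rightarrow> 'a::metric_space) \<Rightarrow> real list \<Rightarrow> ennreal" where
  "inscribed_length g \<equiv> chain_sum (\<lambda>s t. ennreal (dist (g s) (g t)))"

lemma length_on_eq_SUP:
  "length_on g a b = (SUP ts \<in> {ts. sorted ts \<and> set ts \<subseteq> {a..b}}. inscribed_length g ts)"
  unfolding length_on_def
  using sum_consecutive_eq_chain_sum[of "\<lambda>s t. ennreal (dist (g s) (g t))"] by simp

lemma inscribed_length_le_length_on:
  "sorted ts \<Longrightarrow> set ts \<subseteq> {a..b} \<Longrightarrow> inscribed_length g ts \<le> length_on g a b"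
  unfolding length_on_eq_SUP by (rule SUP_upper) auto

lemma dist_le_length_on:
  assumes "s \<in> {a..b}" "t \<in> {a..b}"
  shows "ennreal (dist (g s) (g t)) \<le> length_on g a b"
proof (cases "s \<le> t")
  case True
  then show ?thesis using inscribed_length_le_length_on[of "[s, t]" a b g] assms by simp
next
  case False
  then show ?thesis
    using inscribed_length_le_length_on[of "[t, s]" a b g] assms by (simp add: dist_commute)
qed

lemma length_on_mono: "a \<le> a' \<Longrightarrow> b' \<le> b \<Longrightarrow> length_on g a' b' \<le> length_on g a b"
  unfolding length_on_eq_SUP by (intro SUP_subset_mono) auto

lemma length_on_degenerate:
  assumes "b \<le> a"
  shows "length_on g a b = 0"
  unfolding length_on_eq_SUP
proof (rule antisym[OF SUP_least])
  fix ts assume "ts \<in> {ts. sorted ts \<and> set ts \<subseteq> {a..b}}"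
  then have "inscribed_length g ts = 0"
    using assms by (intro chain_sum_const[of _ _ a]) auto
  then show "inscribed_length g ts \<le> 0" by simp
qed simp

lemma inscribed_length_split_le:
  assumes "sorted ts" "set ts \<subseteq> {a..c}" "b \<in> {a..c}"
  shows "inscribed_length g ts \<le> length_on g a b + length_on g b c"
proof -
  obtain xs ys where split: "ts = xs @ ys" "\<forall>x\<in>set xs. x \<le> b" "\<forall>y\<in>set ys. b < y"
    using sorted_split_at[OF assms(1)] by blast
  have "inscribed_length g ts \<le> inscribed_length g (xs @ [b]) + inscribed_length g (b # ys)"
    unfolding split(1) by (rule chain_sum_insert_le) (rule ennreal_dist_triangle)
  also have "\<dots> \<le> length_on g a b + length_on g b c"
  proof (intro add_mono inscribed_length_le_length_on)
    have "sorted xs" "sorted ys" using assms(1) split(1) by (simp_all add: sorted_append)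
    then show "sorted (xs @ [b])" "sorted (b # ys)"
      using split by (auto simp: sorted_append less_imp_le)
    show "set (xs @ [b]) \<subseteq> {a..b}" "set (b # ys) \<subseteq> {b..c}"
      using assms split by (fastforce simp: less_imp_le)+
  qed
  finally show ?thesis .
qed

lemma length_on_add:
  assumes "a \<le> b" "b \<le> c"
  shows "length_on g a c = length_on g a b + length_on g b c"
proof (rule antisym)
  show "length_on g a c \<le> length_on g a b + length_on g b c"
    unfolding length_on_eq_SUP[of g a c] using assms
    by (intro SUP_least inscribed_length_split_le) auto
next
  let ?P = "\<lambda>a b. {ts. sorted ts \<and> set ts \<subseteq> {a..b}}"
  have ne: "?P a b \<noteq> {}" for a b by (auto intro!: exI[of _ "[]"])
  have "length_on g a b + length_on g b c =
      (SUP xs \<in> ?P a b. SUP ys \<in> ?P b c. inscribed_length g xs + inscribed_length g ys)"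
    unfolding length_on_eq_SUP
    by (simp add: ennreal_SUP_add_left[OF ne, symmetric] ennreal_SUP_add_right[OF ne])
      (rule SUP_commute)
  also have "\<dots> \<le> length_on g a c"
  proof (intro SUP_least)
    fix xs ys assume xs: "xs \<in> ?P a b" and ys: "ys \<in> ?P b c"
    have "inscribed_length g xs + inscribed_length g ys \<le> inscribed_length g (xs @ ys)"
      by (cases "xs = [] \<or> ys = []") (auto simp: chain_sum_append)
    also have "\<dots> \<le> length_on g a c"
    proof (rule inscribed_length_le_length_on)
      have "x \<le> y" if "x \<in> set xs" "y \<in> set ys" for x y
      proof -
        have "x \<le> b" "b \<le> y" using that xs ys by auto
        then show ?thesis by linarith
      qed
      then show "sorted (xs @ ys)" using xs ys by (simp add: sorted_append)
      show "set (xs @ ys) \<subseteq> {a..c}" using xs ys assms by auto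
    qed
    finally show "inscribed_length g xs + inscribed_length g ys \<le> length_on g a c" .
  qed
  finally show "length_on g a b + length_on g b c \<le> length_on g a c" .
qed

lemma length_on_le_reparam:
  assumes mono: "\<And>s t. s \<in> {a..b} \<Longrightarrow> t \<in> {a..b} \<Longrightarrow> s \<le> t \<Longrightarrow> \<phi> s \<le> \<phi> t"
    and img: "\<phi> ` {a..b} \<subseteq> {c..d}"
    and eq: "\<And>t. t \<in> {a..b} \<Longrightarrow> h (\<phi> t) = g t"
  shows "length_on g a b \<le> length_on h c d"
  unfolding length_on_eq_SUP[of g a b]
proof (rule SUP_least)
  fix ts assume ts: "ts \<in> {ts. sorted ts \<and> set ts \<subseteq> {a..b}}"
  have "g t = h (\<phi> t)" if "t \<in> set ts" for t
    using that ts eq by auto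
  then have "inscribed_length g ts = inscribed_length (h \<circ> \<phi>) ts"
    by (intro chain_sum_cong) simp
  also have "\<dots> = inscribed_length h (map \<phi> ts)"
    by (simp add: chain_sum_map)
  also have "\<dots> \<le> length_on h c d"
  proof (rule inscribed_length_le_length_on)
    have "sorted_wrt (\<lambda>s t. \<phi> s \<le> \<phi> t) ts"
    proof (rule sorted_wrt_mono_rel[of ts "(\<le>)"])
      show "sorted_wrt (\<le>) ts" using ts by simp
      show "\<phi> s \<le> \<phi> t" if "s \<in> set ts" "t \<in> set ts" "s \<le> t" for s t
        using that ts by (intro mono) auto
    qed
    then show "sorted (map \<phi> ts)" by (simp add: sorted_map)
    show "set (map \<phi> ts) \<subseteq> {c..d}" using ts img by auto
  qed
  finally show "inscribed_length g ts \<le> length_on h c d" .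
qed

lemma inscribed_length_lipschitz:
  assumes "K-lipschitz_on S g" "set ts \<subseteq> S" "sorted ts" "ts \<noteq> []"
  shows "inscribed_length g ts \<le> ennreal (K * (last ts - hd ts))"
  using assms(2-)
proof (induction ts rule: induct_list012)
  case (3 t u ts)
  have "dist (g t) (g u) \<le> K * dist t u"
    using assms(1) 3(3) by (auto simp: lipschitz_on_def)
  then have "dist (g t) (g u) \<le> K * (u - t)"
    using 3(4) by (simp add: dist_real_def)
  moreover have "inscribed_length g (u # ts) \<le> ennreal (K * (last (u # ts) - u))"
    using 3 by auto
  moreover have "0 \<le> K" using assms(1) by (rule lipschitz_on_nonneg)
  moreover have "t \<le> u" using 3(4) by simp
  moreover have "u \<le> last (u # ts)" using 3(4) by (cases ts) auto
  ultimately have "inscribed_length g (t # u # ts) \<le> ennreal (K * (u - t)) + ennreal (K * (last (u # ts) - u))"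
    by (auto intro!: add_mono ennreal_leI)
  also have "\<dots> = ennreal (K * (last (t # u # ts) - hd (t # u # ts)))"
    using \<open>0 \<le> K\<close> \<open>t \<le> u\<close> \<open>u \<le> last (u # ts)\<close>
    by (subst ennreal_plus[symmetric]) (auto simp: algebra_simps intro: mult_left_mono)
  finally show ?case .
qed auto

lemma length_on_lipschitz:
  assumes "K-lipschitz_on {a..b} g"
  shows "length_on g a b \<le> ennreal (K * (b - a))"
  unfolding length_on_eq_SUP
proof (rule SUP_least)
  fix ts assume ts: "ts \<in> {ts. sorted ts \<and> set ts \<subseteq> {a..b}}"
  show "inscribed_length g ts \<le> ennreal (K * (b - a))"
  proof (cases "ts = []")
    case False
    then have "hd ts \<in> {a..b}" "last ts \<in> {a..b}" using ts hd_in_set last_in_set by blast+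
    then have "K * (last ts - hd ts) \<le> K * (b - a)"
      using assms by (auto simp: lipschitz_on_def intro: mult_left_mono)
    then have "ennreal (K * (last ts - hd ts)) \<le> ennreal (K * (b - a))" by (rule ennreal_leI)
    then show ?thesis
      using inscribed_length_lipschitz[OF assms, of ts] ts False by auto
  qed simp
qed

lemma length_on_reflect_le: "length_on (\<lambda>t. g (c - t)) a b \<le> length_on g (c - b) (c - a)"
  unfolding length_on_eq_SUP[of "\<lambda>t. g (c - t)"]
proof (rule SUP_least)
  fix ts assume ts: "ts \<in> {ts. sorted ts \<and> set ts \<subseteq> {a..b}}"
  have "inscribed_length (\<lambda>t. g (c - t)) ts = inscribed_length g (rev (map (\<lambda>t. c - t) ts))"
    by (simp add: chain_sum_rev chain_sum_map dist_commute)
  also have "\<dots> \<le> length_on g (c - b) (c - a)"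
    using ts by (intro inscribed_length_le_length_on) (auto simp: sorted_wrt_rev sorted_wrt_map)
  finally show "inscribed_length (\<lambda>t. g (c - t)) ts \<le> length_on g (c - b) (c - a)" .
qed

lemma length_on_reflect: "length_on (\<lambda>t. g (c - t)) a b = length_on g (c - b) (c - a)"
proof (rule antisym)
  show "length_on g (c - b) (c - a) \<le> length_on (\<lambda>t. g (c - t)) a b"
    using length_on_reflect_le[of "\<lambda>t. g (c - t)" c "c - b" "c - a"] by simp
qed (rule length_on_reflect_le)

lemma length_on_reversepath: "length_on (reversepath g) a b = length_on g (1 - b) (1 - a)"
  unfolding reversepath_def by (rule length_on_reflect)

lemma curve_length_reversepath [simp]: "curve_length (reversepath g) = curve_length g"
  by (simp add: curve_length_def length_on_reversepath)

section \<open>Continuity of the length function\<close>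

lemma length_on_finite:
  "curve_length \<gamma> < \<infinity> \<Longrightarrow> 0 \<le> a \<Longrightarrow> b \<le> 1 \<Longrightarrow> length_on \<gamma> a b < \<infinity>"
  unfolding curve_length_def using length_on_mono[of 0 a b 1 \<gamma>] by auto

lemma length_fun_eq: "t \<in> {0..1} \<Longrightarrow> length_fun \<gamma> t = enn2real (length_on \<gamma> 0 t)"
  by (simp add: length_fun_def)

lemma length_fun_nonpos: "t \<le> 0 \<Longrightarrow> length_fun \<gamma> t = 0"
  by (simp add: length_fun_def length_on_degenerate)

lemma length_fun_ge_1: "1 \<le> t \<Longrightarrow> length_fun \<gamma> t = enn2real (curve_length \<gamma>)"
  by (simp add: length_fun_def curve_length_def)

lemma length_on_eq_length_fun_diff:
  assumes fin: "curve_length \<gamma> < \<infinity>" and ab: "0 \<le> a" "a \<le> b" "b \<le> 1"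
  shows "length_on \<gamma> a b = ennreal (length_fun \<gamma> b - length_fun \<gamma> a)"
proof -
  have "length_on \<gamma> 0 b = length_on \<gamma> 0 a + length_on \<gamma> a b"
    using ab by (intro length_on_add) auto
  moreover have "length_on \<gamma> 0 a < \<infinity>" "length_on \<gamma> a b < \<infinity>"
    using length_on_finite[OF fin] ab by auto
  ultimately show ?thesis
    using ab by (simp add: length_fun_eq enn2real_plus ennreal_enn2real_if)
qed

lemma mono_length_fun:
  assumes "curve_length \<gamma> < \<infinity>"
  shows "mono (length_fun \<gamma>)"
proof (rule monoI)
  fix s t :: real assume "s \<le> t"
  then show "length_fun \<gamma> s \<le> length_fun \<gamma> t"
    unfolding length_fun_def using length_on_finite[OF assms]
    by (intro enn2real_mono length_on_mono) auto
qed

lemma dist_le_length_fun_diff: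
  assumes "curve_length \<gamma> < \<infinity>" "a \<in> {0..1}" "b \<in> {0..1}"
  shows "dist (\<gamma> a) (\<gamma> b) \<le> \<bar>length_fun \<gamma> a - length_fun \<gamma> b\<bar>"
proof -
  have *: "dist (\<gamma> a) (\<gamma> b) \<le> length_fun \<gamma> b - length_fun \<gamma> a"
    if "0 \<le> a" "a \<le> b" "b \<le> 1" for a b
  proof -
    have "ennreal (dist (\<gamma> a) (\<gamma> b)) \<le> ennreal (length_fun \<gamma> b - length_fun \<gamma> a)"
      using that dist_le_length_on[of a a b b \<gamma>] length_on_eq_length_fun_diff[OF assms(1) that]
      by simp
    moreover have "length_fun \<gamma> a \<le> length_fun \<gamma> b"
      using mono_length_fun[OF assms(1)] that by (simp add: monoD)
    ultimately show ?thesis by (simp add: ennreal_le_iff)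
  qed
  show ?thesis
    using *[of a b] *[of b a] assms(2,3) by (cases "a \<le> b") (auto simp: dist_commute)
qed

lemma finite_gap_right:
  fixes T :: "real set"
  assumes "finite T" "\<And>t. t \<in> T \<Longrightarrow> t0 < t" "t0 < b"
  obtains h where "t0 < h" "h \<le> b" "\<And>t. t \<in> T \<Longrightarrow> h < t"
proof -
  define m where "m = Min (insert b T)"
  have "t0 < m" unfolding m_def using assms by (subst Min_gr_iff) auto
  moreover have "m \<le> b" "\<And>t. t \<in> T \<Longrightarrow> m \<le> t"
    unfolding m_def using assms(1) by (auto intro: Min_le)
  ultimately show ?thesis by (intro that[of "(t0 + m) / 2"]) force+
qed

lemma inscribed_length_le_first_step:
  assumes ts: "sorted ts" "set ts \<subseteq> {t0..b}" and h: "t0 < h" "h \<le> b"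
    and gap: "\<And>t. t \<in> set ts \<Longrightarrow> t0 < t \<Longrightarrow> h < t"
  shows "inscribed_length g ts \<le> ennreal (dist (g t0) (g h)) + length_on g h b"
proof -
  obtain xs ys where split: "ts = xs @ ys" "\<forall>x\<in>set xs. x \<le> h" "\<forall>y\<in>set ys. h < y"
    using sorted_split_at[OF ts(1)] by blast
  have xs_t0: "x = t0" if "x \<in> set xs" for x
  proof -
    have "x \<in> set ts" "x \<le> h" using that split by auto
    then show ?thesis using ts(2) gap[of x] by force
  qed
  have "inscribed_length g ts \<le> inscribed_length g (xs @ [h]) + inscribed_length g (h # ys)"
    unfolding split(1) by (rule chain_sum_insert_le) (rule ennreal_dist_triangle)
  also have "\<dots> \<le> ennreal (dist (g t0) (g h)) + length_on g h b"
  proof (rule add_mono)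
    show "inscribed_length g (xs @ [h]) \<le> ennreal (dist (g t0) (g h))"
    proof (cases "xs = []")
      case False
      then have "last xs = t0" using xs_t0 last_in_set by blast
      moreover have "inscribed_length g xs = 0"
        by (rule chain_sum_const[of _ xs t0]) (simp_all add: xs_t0)
      ultimately show ?thesis using False by (simp add: chain_sum_append)
    qed simp
    show "inscribed_length g (h # ys) \<le> length_on g h b"
    proof (rule inscribed_length_le_length_on)
      show "sorted (h # ys)" using split ts(1) by (auto simp: sorted_append less_imp_le)
      show "set (h # ys) \<subseteq> {h..b}" using split ts(2) h by (fastforce simp: less_imp_le)
    qed
  qed
  finally show ?thesis .
qed

lemma length_on_right_small:
  fixes \<epsilon> :: real
  assumes \<gamma>: "path \<gamma>" "curve_length \<gamma> < \<infinity>" and t0: "0 \<le> t0" "t0 < 1" and \<epsilon>: "0 < \<epsilon>"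
  shows "\<exists>h\<in>{t0<..1}. length_on \<gamma> t0 h < ennreal \<epsilon>"
proof -
  have fin: "length_on \<gamma> t0 1 \<noteq> \<infinity>" using length_on_finite[OF \<gamma>(2), of t0 1] t0 by simp
  have ne: "{ts. sorted ts \<and> set ts \<subseteq> {t0..1}} \<noteq> {}" by (auto intro!: exI[of _ "[]"])
  obtain ts where ts: "sorted ts" "set ts \<subseteq> {t0..1}"
    and approx: "length_on \<gamma> t0 1 < inscribed_length \<gamma> ts + ennreal (\<epsilon> / 2)"
    using SUP_approx_ennreal[OF _ ne length_on_eq_SUP fin, of "\<epsilon> / 2"] \<epsilon> by auto
  have "continuous_on {0..1} \<gamma>" using \<gamma>(1) by (simp add: path_def)
  then obtain \<delta> where \<delta>: "0 < \<delta>" "\<And>t. t \<in> {0..1} \<Longrightarrow> dist t t0 < \<delta> \<Longrightarrow> dist (\<gamma> t) (\<gamma> t0) < \<epsilon> / 2"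
    using t0 \<epsilon> unfolding continuous_on_iff by (metis atLeastAtMost_iff half_gt_zero less_eq_real_def)
  obtain h where h: "t0 < h" "h \<le> min 1 (t0 + \<delta> / 2)" and gap: "\<And>t. t \<in> set ts \<Longrightarrow> t0 < t \<Longrightarrow> h < t"
  proof (rule finite_gap_right[of "{t \<in> set ts. t0 < t}" t0 "min 1 (t0 + \<delta> / 2)"])
    show "t0 < min 1 (t0 + \<delta> / 2)" using t0 \<delta>(1) by simp
  qed auto
  have "inscribed_length \<gamma> ts \<le> ennreal (dist (\<gamma> t0) (\<gamma> h)) + length_on \<gamma> h 1"
    using ts h gap by (intro inscribed_length_le_first_step) auto
  also have "\<dots> \<le> ennreal (\<epsilon> / 2) + length_on \<gamma> h 1"
    using \<delta>(2)[of h] h t0 by (intro add_right_mono ennreal_leI) (simp add: dist_commute dist_real_def)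
  finally have ts_le: "inscribed_length \<gamma> ts \<le> ennreal (\<epsilon> / 2) + length_on \<gamma> h 1" .
  have "length_on \<gamma> t0 1 < inscribed_length \<gamma> ts + ennreal (\<epsilon> / 2)" by (rule approx)
  also have "\<dots> \<le> (ennreal (\<epsilon> / 2) + length_on \<gamma> h 1) + ennreal (\<epsilon> / 2)"
    using ts_le by (rule add_right_mono)
  also have "\<dots> = length_on \<gamma> h 1 + ennreal \<epsilon>"
    using \<epsilon> by (simp add: ac_simps ennreal_plus[symmetric] del: ennreal_plus)
  also have "length_on \<gamma> t0 1 = length_on \<gamma> h 1 + length_on \<gamma> t0 h"
    using length_on_add[of t0 h 1 \<gamma>] h by (simp add: add.commute)
  finally show ?thesis using h by (auto simp: ennreal_add_left_cancel_less)
qed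

lemma length_on_left_small:
  fixes \<epsilon> :: real
  assumes \<gamma>: "path \<gamma>" "curve_length \<gamma> < \<infinity>" and t0: "0 < t0" "t0 \<le> 1" and \<epsilon>: "0 < \<epsilon>"
  shows "\<exists>h\<in>{0..<t0}. length_on \<gamma> h t0 < ennreal \<epsilon>"
proof -
  obtain h where "h \<in> {1 - t0<..1}" "length_on (reversepath \<gamma>) (1 - t0) h < ennreal \<epsilon>"
    using length_on_right_small[of "reversepath \<gamma>" "1 - t0" \<epsilon>] \<gamma> t0 \<epsilon> by auto
  then show ?thesis
    by (intro bexI[of _ "1 - h"]) (auto simp: length_on_reversepath)
qed

lemma length_on_two_sided_small:
  fixes \<epsilon> :: real
  assumes \<gamma>: "path \<gamma>" "curve_length \<gamma> < \<infinity>" and t0: "t0 \<in> {0..1}" and \<epsilon>: "0 < \<epsilon>"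
  shows "\<exists>d>0. \<forall>t\<in>{0..1}. dist t t0 < d \<longrightarrow> length_on \<gamma> (min t t0) (max t t0) < ennreal \<epsilon>"
proof -
  obtain dr where dr: "dr > 0" "\<And>t. t \<in> {t0..1} \<Longrightarrow> t - t0 < dr \<Longrightarrow> length_on \<gamma> t0 t < ennreal \<epsilon>"
  proof (cases "t0 < 1")
    case True
    then obtain h where h: "h \<in> {t0<..1}" "length_on \<gamma> t0 h < ennreal \<epsilon>"
      using length_on_right_small[OF \<gamma> _ True \<epsilon>] t0 by auto
    show ?thesis
    proof (rule that[of "h - t0"])
      fix t assume "t \<in> {t0..1}" "t - t0 < h - t0"
      then have "length_on \<gamma> t0 t \<le> length_on \<gamma> t0 h" by (intro length_on_mono) auto
      then show "length_on \<gamma> t0 t < ennreal \<epsilon>" using h(2) by order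
    qed (use h in auto)
  next
    case False
    then show ?thesis using t0 \<epsilon> by (intro that[of 1]) (auto simp: length_on_degenerate)
  qed
  obtain dl where dl: "dl > 0" "\<And>t. t \<in> {0..t0} \<Longrightarrow> t0 - t < dl \<Longrightarrow> length_on \<gamma> t t0 < ennreal \<epsilon>"
  proof (cases "0 < t0")
    case True
    then obtain h where h: "h \<in> {0..<t0}" "length_on \<gamma> h t0 < ennreal \<epsilon>"
      using length_on_left_small[OF \<gamma> True _ \<epsilon>] t0 by auto
    show ?thesis
    proof (rule that[of "t0 - h"])
      fix t assume "t \<in> {0..t0}" "t0 - t < t0 - h"
      then have "length_on \<gamma> t t0 \<le> length_on \<gamma> h t0" by (intro length_on_mono) auto
      then show "length_on \<gamma> t t0 < ennreal \<epsilon>" using h(2) by order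
    qed (use h in auto)
  next
    case False
    then show ?thesis using t0 \<epsilon> by (intro that[of 1]) (auto simp: length_on_degenerate)
  qed
  show ?thesis
  proof (intro exI[of _ "min dr dl"] conjI ballI impI)
    fix t assume t: "t \<in> {0..1}" "dist t t0 < min dr dl"
    show "length_on \<gamma> (min t t0) (max t t0) < ennreal \<epsilon>"
      using dr(2)[of t] dl(2)[of t] t t0 by (cases "t0 \<le> t") (auto simp: dist_real_def)
  qed (use dr dl in auto)
qed

lemma continuous_on_length_fun:
  assumes \<gamma>: "path \<gamma>" "curve_length \<gamma> < \<infinity>"
  shows "continuous_on UNIV (length_fun \<gamma>)"
proof -
  have dist_eq: "dist (length_fun \<gamma> t) (length_fun \<gamma> t0) = enn2real (length_on \<gamma> (min t t0) (max t t0))"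
    if "t \<in> {0..1}" "t0 \<in> {0..1}" for t t0
    using that length_on_eq_length_fun_diff[OF \<gamma>(2), of "min t t0" "max t t0"]
      mono_length_fun[OF \<gamma>(2)]
    by (cases "t \<le> t0") (auto simp: dist_real_def monoD)
  have "continuous_on {0..1} (length_fun \<gamma>)"
    unfolding continuous_on_iff
  proof (intro ballI allI impI)
    fix t0 \<epsilon> :: real assume t0: "t0 \<in> {0..1}" and \<epsilon>: "0 < \<epsilon>"
    obtain d where d: "d > 0" "\<forall>t\<in>{0..1}. dist t t0 < d \<longrightarrow> length_on \<gamma> (min t t0) (max t t0) < ennreal \<epsilon>"
      using length_on_two_sided_small[OF \<gamma> t0 \<epsilon>] by blast
    have "enn2real (length_on \<gamma> (min t t0) (max t t0)) < \<epsilon>" if "t \<in> {0..1}" "dist t t0 < d" for t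
    proof -
      have small: "length_on \<gamma> (min t t0) (max t t0) < ennreal \<epsilon>" using d that by blast
      then have "length_on \<gamma> (min t t0) (max t t0) < top"
        using ennreal_less_top order.strict_trans by blast
      then show ?thesis using small by simp
    qed
    then show "\<exists>d>0. \<forall>t\<in>{0..1}. dist t t0 < d \<longrightarrow> dist (length_fun \<gamma> t) (length_fun \<gamma> t0) < \<epsilon>"
      using d(1) t0 by (auto simp: dist_eq)
  qed
  then have "continuous_on UNIV (\<lambda>t. length_fun \<gamma> (max 0 (min 1 t)))"
    by (rule continuous_on_compose2) (auto intro!: continuous_intros)
  moreover have "length_fun \<gamma> (max 0 (min 1 t)) = length_fun \<gamma> t" for t
    by (simp add: length_fun_def)
  ultimately show ?thesis by simp
qed

section \<open>Line integrals along arc-length parametrizations\<close>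

lemma arc_length_parametrization:
  assumes \<gamma>: "path \<gamma>" "curve_length \<gamma> < \<infinity>"
  obtains A where "1-lipschitz_on UNIV A" "\<And>t. t \<in> {0..1} \<Longrightarrow> A (length_fun \<gamma> t) = \<gamma> t"
proof -
  define L where "L = enn2real (curve_length \<gamma>)"
  have range: "\<exists>t\<in>{0..1}. length_fun \<gamma> t = max 0 (min L v)" for v
  proof -
    have "length_fun \<gamma> 0 \<le> max 0 (min L v)" "max 0 (min L v) \<le> length_fun \<gamma> 1"
      by (simp_all add: length_fun_nonpos length_fun_ge_1 L_def)
    then show ?thesis
      using IVT'[of "length_fun \<gamma>" 0 "max 0 (min L v)" 1]
        continuous_on_subset[OF continuous_on_length_fun[OF \<gamma>]] by force
  qed
  \<comment> \<open>Any choice of \<open>\<sigma>\<close> works: \<open>\<gamma>\<close> is constant where the length function is.\<close>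
  define \<sigma> where "\<sigma> v = (SOME t. t \<in> {0..1} \<and> length_fun \<gamma> t = max 0 (min L v))" for v
  have \<sigma>: "\<sigma> v \<in> {0..1}" "length_fun \<gamma> (\<sigma> v) = max 0 (min L v)" for v
    using someI_ex[OF range[of v, unfolded Bex_def]] by (auto simp: \<sigma>_def)
  show ?thesis
  proof
    show "1-lipschitz_on UNIV (\<gamma> \<circ> \<sigma>)"
    proof (rule lipschitz_onI)
      fix v w :: real
      have "dist (\<gamma> (\<sigma> v)) (\<gamma> (\<sigma> w)) \<le> \<bar>length_fun \<gamma> (\<sigma> v) - length_fun \<gamma> (\<sigma> w)\<bar>"
        using dist_le_length_fun_diff[OF \<gamma>(2) \<sigma>(1) \<sigma>(1)] .
      also have "\<dots> \<le> 1 * dist v w" by (simp add: \<sigma>(2) dist_real_def max_def min_def)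
      finally show "dist ((\<gamma> \<circ> \<sigma>) v) ((\<gamma> \<circ> \<sigma>) w) \<le> 1 * dist v w" by simp
    qed simp
    fix t :: real assume t: "t \<in> {0..1}"
    have "0 \<le> length_fun \<gamma> t" by (simp add: length_fun_def)
    moreover have "length_fun \<gamma> t \<le> L"
      using monoD[OF mono_length_fun[OF \<gamma>(2)], of t 1] t by (simp add: length_fun_ge_1 L_def)
    ultimately have "length_fun \<gamma> (\<sigma> (length_fun \<gamma> t)) = length_fun \<gamma> t" by (simp add: \<sigma>(2))
    then show "(\<gamma> \<circ> \<sigma>) (length_fun \<gamma> t) = \<gamma> t"
      using dist_le_length_fun_diff[OF \<gamma>(2) \<sigma>(1) t, of "length_fun \<gamma> t"] by simp
  qed
qed

lemma superlevel_set_mono_continuous: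
  fixes F :: "real \<Rightarrow> real"
  assumes cont: "continuous_on UNIV F" and mono: "mono F" and x: "F a \<le> x" "x < F b"
  obtains t0 where "F t0 = x" "{t. x < F t} = {t0<..}"
proof -
  define S where "S = {t. F t \<le> x} \<inter> {a..b}"
  have "a \<le> b"
  proof (rule ccontr)
    assume "\<not> a \<le> b"
    then show False using x monoD[OF mono, of b a] by simp
  qed
  have "closed S"
    unfolding S_def by (intro closed_Int closed_Collect_le cont continuous_on_const) simp
  moreover have "a \<in> S" "bdd_above S" using x \<open>a \<le> b\<close> by (auto simp: S_def)
  ultimately have t0: "Sup S \<in> S" by (intro closed_contains_Sup) auto
  obtain t1 where t1: "t1 \<in> {a..b}" "F t1 = x"
    using IVT'[of F a x b] x \<open>a \<le> b\<close> continuous_on_subset[OF cont] by auto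
  then have "t1 \<le> Sup S" using \<open>bdd_above S\<close> by (intro cSup_upper) (auto simp: S_def)
  then have Ft0: "F (Sup S) = x" using t0 t1 monoD[OF mono] by (fastforce simp: S_def)
  have "x < F t \<longleftrightarrow> Sup S < t" for t
  proof
    assume "x < F t"
    then show "Sup S < t" using Ft0 monoD[OF mono, of t "Sup S"] by force
  next
    assume t: "Sup S < t"
    show "x < F t"
    proof (cases "t \<le> b")
      case True
      then have "t \<notin> S" using t \<open>bdd_above S\<close> cSup_upper[of t S] by auto
      then show ?thesis using True t t0 by (auto simp: S_def)
    next
      case False
      then show ?thesis using x monoD[OF mono, of b t] by simp
    qed
  qed
  then have "{t. x < F t} = {Sup S<..}" by auto
  with Ft0 show ?thesis using that by blast
qed

context
  fixes F :: "real \<Rightarrow> real" and L :: real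
  assumes continuous: "continuous_on UNIV F" and mono: "mono F"
    and left: "\<And>t. t \<le> 0 \<Longrightarrow> F t = 0" and right: "\<And>t. 1 \<le> t \<Longrightarrow> F t = L"
begin

lemma emeasure_interval_measure_Ioc_continuous:
  assumes "a \<le> b"
  shows "emeasure (interval_measure F) {a<..b} = F b - F a"
proof (rule emeasure_interval_measure_Ioc[OF assms])
  show "F x \<le> F y" if "x \<le> y" for x y using mono that by (rule monoD)
  show "continuous (at_right x) F" for x
    using continuous by (simp add: continuous_on_eq_continuous_at continuous_at_imp_continuous_at_within)
qed

lemma emeasure_interval_measure_UNIV: "emeasure (interval_measure F) UNIV = L"
proof (rule interval_measure_UNIV)
  show "F x \<le> F y" if "x \<le> y" for x y using mono that by (rule monoD)
  show "continuous (at_right x) F" for x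
    using continuous by (simp add: continuous_on_eq_continuous_at continuous_at_imp_continuous_at_within)
  show "(F \<longlongrightarrow> 0) at_bot"
    by (rule tendsto_eventually) (auto simp: eventually_at_bot_linorder intro!: exI[of _ 0] left)
  show "(F \<longlongrightarrow> L) at_top"
    by (rule tendsto_eventually) (auto simp: eventually_at_top_linorder intro!: exI[of _ 1] right)
  show "0 \<le> L" using left[of 0] right[of 1] monoD[OF mono, of 0 1] by simp
qed

lemma AE_interval_measure_unit: "AE t in interval_measure F. t \<in> {0<..1}"
proof -
  have "emeasure (interval_measure F) {0<..1} = L"
    using emeasure_interval_measure_Ioc_continuous[of 0 1] left[of 0] right[of 1] by simp
  then have "emeasure (interval_measure F) (UNIV - {0<..1}) = 0"
    using emeasure_interval_measure_UNIV by (subst emeasure_Diff) simp_all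
  then show ?thesis by (intro AE_I[of _ _ "UNIV - {0<..1}"]) auto
qed

lemma emeasure_interval_measure_superlevel:
  "emeasure (interval_measure F) {t. x < F t} = emeasure lborel ({0..L} \<inter> {x<..})"
proof (cases "x < 0 \<or> L \<le> x")
  case True
  have "x < F t \<longleftrightarrow> x < 0" for t
    using True monoD[OF mono, of "min t 0" t] monoD[OF mono, of t "max t 1"] left[of "min t 0"] right[of "max t 1"]
    by auto
  then have "{t. x < F t} = (if x < 0 then UNIV else {})" by auto
  moreover have "{0..L} \<inter> {x<..} = (if x < 0 then {0..L} else {})" using True by auto
  moreover have "0 \<le> L" using left[of 0] right[of 1] monoD[OF mono, of 0 1] by simp
  ultimately show ?thesis using emeasure_interval_measure_UNIV by simp
next
  case False
  then obtain t0 where t0: "F t0 = x" "{t. x < F t} = {t0<..}"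
    using superlevel_set_mono_continuous[OF continuous mono, of 0 x 1] left[of 0] right[of 1] by auto
  then have "t0 < 1" using False right[of t0] by force
  have "emeasure (interval_measure F) {t. x < F t} = emeasure (interval_measure F) ({t0<..} \<inter> {0<..1})"
    unfolding t0(2) using AE_interval_measure_unit by (intro emeasure_eq_AE) auto
  also have "{t0<..} \<inter> {0<..1} = {max 0 t0<..1}" by auto
  also have "emeasure (interval_measure F) {max 0 t0<..1} = L - x"
    using emeasure_interval_measure_Ioc_continuous[of "max 0 t0" 1] \<open>t0 < 1\<close> left[of 0] left[of t0]
      right[of 1] t0(1) False
    by (auto simp: max_def)
  also have "\<dots> = emeasure lborel ({0..L} \<inter> {x<..})"
  proof -
    have "{0..L} \<inter> {x<..} = {x<..L}" using False by auto
    then show ?thesis using False by simp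
  qed
  finally show ?thesis .
qed

lemma distr_interval_measure_self:
  "distr (interval_measure F) borel F = density lborel (indicator {0..L})"
proof (rule measure_eqI_lessThan)
  have "F \<in> borel_measurable (interval_measure F)"
    using borel_measurable_continuous_onI[OF continuous]
    by (subst measurable_cong_sets[where M'=borel and N'=borel]) auto
  then have emeasure_distr: "emeasure (distr (interval_measure F) borel F) {x<..} =
      emeasure (interval_measure F) {t. x < F t}" for x
    by (subst emeasure_distr) (auto simp: vimage_def)
  show "emeasure (distr (interval_measure F) borel F) {x<..} < \<infinity>" for x
    unfolding emeasure_distr emeasure_interval_measure_superlevel
    by (intro emeasure_bounded_finite bounded_Int) auto
  show "emeasure (distr (interval_measure F) borel F) {x<..} =
      emeasure (density lborel (indicator {0..L})) {x<..}" for x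
    unfolding emeasure_distr emeasure_interval_measure_superlevel by (simp add: emeasure_restricted)
qed simp_all

end

lemma line_integral_arc_length:
  assumes \<gamma>: "path \<gamma>" "curve_length \<gamma> < \<infinity>"
    and A: "continuous_on UNIV A" "\<And>t. t \<in> {0..1} \<Longrightarrow> A (length_fun \<gamma> t) = \<gamma> t"
    and \<rho>: "\<rho> \<in> borel_measurable borel"
  shows "line_integral \<rho> \<gamma> = (\<integral>\<^sup>+ v. indicator {0..enn2real (curve_length \<gamma>)} v * \<rho> (A v) \<partial>lborel)"
proof -
  let ?F = "length_fun \<gamma>"
  note F = continuous_on_length_fun[OF \<gamma>] mono_length_fun[OF \<gamma>(2)] length_fun_nonpos length_fun_ge_1
  have \<rho>A: "(\<lambda>v. \<rho> (A v)) \<in> borel_measurable borel"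
    using measurable_comp[OF borel_measurable_continuous_onI[OF A(1)] \<rho>] by (simp add: o_def)
  have "line_integral \<rho> \<gamma> = (\<integral>\<^sup>+ t. \<rho> (A (?F t)) \<partial>interval_measure ?F)"
    unfolding line_integral_def using AE_interval_measure_unit[OF F]
    by (intro nn_integral_cong_AE) (auto simp: A(2))
  also have "\<dots> = (\<integral>\<^sup>+ v. \<rho> (A v) \<partial>distr (interval_measure ?F) borel ?F)"
  proof (rule nn_integral_distr[symmetric])
    show "?F \<in> borel_measurable (interval_measure ?F)"
      using borel_measurable_continuous_onI[OF F(1)]
      by (subst measurable_cong_sets[where M'=borel and N'=borel]) auto
  qed (use \<rho>A in simp)
  also have "\<dots> = (\<integral>\<^sup>+ v. indicator {0..enn2real (curve_length \<gamma>)} v * \<rho> (A v) \<partial>lborel)"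
    using \<rho>A by (simp add: distr_interval_measure_self[OF F] nn_integral_density)
  finally show ?thesis .
qed

lemma lipschitz_on_rescale:
  fixes A :: "real \<Rightarrow> 'a::metric_space"
  assumes "1-lipschitz_on UNIV A" "0 \<le> L"
  shows "L-lipschitz_on S (\<lambda>u. A (L * u))"
proof (rule lipschitz_onI)
  fix u v :: real
  have "dist (A (L * u)) (A (L * v)) \<le> 1 * dist (L * u) (L * v)"
    using assms(1) by (rule lipschitz_onD) auto
  also have "\<dots> = L * dist u v"
    using assms(2) by (simp add: dist_real_def abs_mult flip: right_diff_distrib)
  finally show "dist (A (L * u)) (A (L * v)) \<le> L * dist u v" .
qed (rule assms(2))

lemma length_on_arc_length_reparam:
  assumes \<gamma>: "path \<gamma>" "curve_length \<gamma> < \<infinity>"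
    and A: "1-lipschitz_on UNIV A" "\<And>t. t \<in> {0..1} \<Longrightarrow> A (length_fun \<gamma> t) = \<gamma> t"
    and L: "L = enn2real (curve_length \<gamma>)" and u: "u \<in> {0..1}"
  shows "length_on (\<lambda>u. A (L * u)) 0 u = ennreal (L * u)"
proof (rule antisym)
  have "L-lipschitz_on {0..u} (\<lambda>u. A (L * u))"
    using A(1) by (rule lipschitz_on_rescale) (simp add: L)
  then show "length_on (\<lambda>u. A (L * u)) 0 u \<le> ennreal (L * u)"
    using length_on_lipschitz by fastforce
next
  show "ennreal (L * u) \<le> length_on (\<lambda>u. A (L * u)) 0 u"
  proof (cases "L = 0")
    case False
    then have "0 < L" using L enn2real_nonneg[of "curve_length \<gamma>"] by linarith
    have "length_fun \<gamma> 0 \<le> L * u" "L * u \<le> length_fun \<gamma> 1"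
      using u \<open>0 < L\<close> by (simp_all add: length_fun_nonpos length_fun_ge_1 L mult_left_le)
    then obtain tu where tu: "tu \<in> {0..1}" "length_fun \<gamma> tu = L * u"
      using IVT'[of "length_fun \<gamma>" 0 "L * u" 1]
        continuous_on_subset[OF continuous_on_length_fun[OF \<gamma>]] by force
    have mono: "length_fun \<gamma> s \<le> length_fun \<gamma> t" if "s \<le> t" for s t
      using mono_length_fun[OF \<gamma>(2)] that by (rule monoD)
    have "ennreal (L * u) = length_on \<gamma> 0 tu"
      using tu length_on_eq_length_fun_diff[OF \<gamma>(2), of 0 tu] by (simp add: length_fun_nonpos)
    also have "\<dots> \<le> length_on (\<lambda>u. A (L * u)) 0 u"
    proof (rule length_on_le_reparam[where \<phi> = "\<lambda>t. length_fun \<gamma> t / L"])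
      show "length_fun \<gamma> s / L \<le> length_fun \<gamma> t / L" if "s \<le> t" for s t
        using mono[OF that] \<open>0 < L\<close> by (simp add: divide_right_mono)
      show "(\<lambda>t. length_fun \<gamma> t / L) ` {0..tu} \<subseteq> {0..u}"
      proof (rule image_subsetI)
        fix t assume "t \<in> {0..tu}"
        then have "0 \<le> length_fun \<gamma> t" "length_fun \<gamma> t \<le> L * u"
          using mono[of t tu] tu by (auto simp: length_fun_def)
        then show "length_fun \<gamma> t / L \<in> {0..u}"
          using \<open>0 < L\<close> by (auto simp: divide_le_eq mult.commute)
      qed
      show "A (L * (length_fun \<gamma> t / L)) = \<gamma> t" if "t \<in> {0..tu}" for t
        using A(2)[of t] that tu \<open>0 < L\<close> by simp
    qed
    finally show ?thesis .
  qed simp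
qed

lemma arc_length_reparametrization:
  assumes \<gamma>: "path \<gamma>" "curve_length \<gamma> < \<infinity>"
  obtains \<beta> where "(enn2real (curve_length \<gamma>))-lipschitz_on {0..1} \<beta>" "\<beta> 0 = \<gamma> 0" "\<beta> 1 = \<gamma> 1"
    "curve_length \<beta> = curve_length \<gamma>"
    "\<And>\<rho>. \<rho> \<in> borel_measurable borel \<Longrightarrow> line_integral \<rho> \<beta> = line_integral \<rho> \<gamma>"
proof -
  obtain A where A: "1-lipschitz_on UNIV A" "\<And>t. t \<in> {0..1} \<Longrightarrow> A (length_fun \<gamma> t) = \<gamma> t"
    using arc_length_parametrization[OF \<gamma>] by blast
  define L where "L = enn2real (curve_length \<gamma>)"
  define \<beta> where "\<beta> u = A (L * u)" for u
  have L: "0 \<le> L" by (simp add: L_def)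
  have length_\<beta>: "length_on \<beta> 0 u = ennreal (L * u)" if "u \<in> {0..1}" for u
    unfolding \<beta>_def using \<gamma> A L_def that by (rule length_on_arc_length_reparam)
  have lip: "L-lipschitz_on {0..1} \<beta>"
    unfolding \<beta>_def using A(1) L by (rule lipschitz_on_rescale)
  have length_fun_\<beta>: "length_fun \<beta> u = L * u" if "u \<in> {0..1}" for u
    using length_\<beta>[OF that] that L by (simp add: length_fun_eq)
  have same_length: "curve_length \<beta> = curve_length \<gamma>"
    using length_\<beta>[of 1] \<gamma>(2) by (simp add: curve_length_def L_def)
  have "line_integral \<rho> \<beta> = line_integral \<rho> \<gamma>" if \<rho>: "\<rho> \<in> borel_measurable borel" for \<rho>
  proof -
    have \<beta>_path: "path \<beta>" unfolding path_def using lip by (rule lipschitz_on_continuous_on)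
    have "continuous_on UNIV A" using A(1) by (rule lipschitz_on_continuous_on)
    \<comment> \<open>Both sides are the integral of \<open>\<rho> \<circ> A\<close> over \<open>[0, L]\<close>.\<close>
    then show ?thesis
      using line_integral_arc_length[OF \<beta>_path _ _ _ \<rho>, of A] line_integral_arc_length[OF \<gamma> _ A(2) \<rho>]
        same_length \<gamma>(2) length_fun_\<beta> by (simp add: \<beta>_def)
  qed
  moreover have "\<beta> 0 = \<gamma> 0" "\<beta> 1 = \<gamma> 1"
    using A(2)[of 0] A(2)[of 1] by (simp_all add: \<beta>_def length_fun_nonpos length_fun_ge_1 L_def)
  ultimately show ?thesis using that lip same_length by (simp add: L_def)
qed

lemma line_integral_reversepath:
  assumes \<gamma>: "path \<gamma>" "curve_length \<gamma> < \<infinity>" and \<rho>: "\<rho> \<in> borel_measurable borel"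
  shows "line_integral \<rho> (reversepath \<gamma>) = line_integral \<rho> \<gamma>"
proof -
  obtain A where A: "1-lipschitz_on UNIV A" "\<And>t. t \<in> {0..1} \<Longrightarrow> A (length_fun \<gamma> t) = \<gamma> t"
    using arc_length_parametrization[OF \<gamma>] by blast
  have A_cont: "continuous_on UNIV A" using A(1) by (rule lipschitz_on_continuous_on)
  define L where "L = enn2real (curve_length \<gamma>)"
  have rev: "path (reversepath \<gamma>)" "curve_length (reversepath \<gamma>) < \<infinity>" using \<gamma> by simp_all
  have "A (L - length_fun (reversepath \<gamma>) t) = reversepath \<gamma> t" if t: "t \<in> {0..1}" for t
  proof -
    have "length_fun \<gamma> (1 - t) \<le> length_fun \<gamma> 1"
      using mono_length_fun[OF \<gamma>(2)] t by (simp add: monoD)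
    then have "length_fun (reversepath \<gamma>) t = L - length_fun \<gamma> (1 - t)"
      using t length_on_eq_length_fun_diff[OF \<gamma>(2), of "1 - t" 1]
      by (simp add: length_fun_eq length_on_reversepath L_def curve_length_def)
    then show ?thesis using A(2)[of "1 - t"] t by (simp add: reversepath_def)
  qed
  then have "line_integral \<rho> (reversepath \<gamma>) = (\<integral>\<^sup>+ v. indicator {0..L} v * \<rho> (A (L - v)) \<partial>lborel)"
    using line_integral_arc_length[OF rev, of "\<lambda>v. A (L - v)" \<rho>] \<rho> A_cont
    by (simp add: L_def continuous_on_compose2[OF A_cont] continuous_intros)
  also have "\<dots> = (\<integral>\<^sup>+ v. indicator {0..L} v * \<rho> (A v) \<partial>lborel)"
  proof -
    have "(\<lambda>v. indicator {0..L} v * \<rho> (A v)) \<in> borel_measurable borel"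
      using measurable_comp[OF borel_measurable_continuous_onI[OF A_cont] \<rho>] by (simp add: o_def)
    from nn_integral_real_affine[OF this, of "-1" L] show ?thesis
      by (simp add: indicator_def cong: if_cong) (simp add: ac_simps)
  qed
  also have "\<dots> = line_integral \<rho> \<gamma>"
    using line_integral_arc_length[OF \<gamma> A_cont A(2) \<rho>] by (simp add: L_def)
  finally show ?thesis .
qed

section \<open>Modulus and essential length\<close>

lemma Mod_mono_minorized:
  assumes "\<And>\<gamma>. \<gamma> \<in> \<Gamma> \<Longrightarrow> \<exists>\<beta>\<in>\<Gamma>'. \<forall>\<rho>\<in>borel_measurable borel. line_integral \<rho> \<beta> \<le> line_integral \<rho> \<gamma>"
  shows "Mod \<mu> p \<Gamma> \<le> Mod \<mu> p \<Gamma>'"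
proof -
  have "admissible \<Gamma> \<rho>" if "admissible \<Gamma>' \<rho>" for \<rho>
    using that assms unfolding admissible_def by (meson order_trans)
  then show ?thesis unfolding Mod_def by (auto intro!: INF_superset_mono)
qed

lemma Mod_empty [simp]: "Mod \<mu> p {} = 0"
proof -
  have adm: "admissible {} (\<lambda>_. 0)" by (simp add: admissible_def)
  show ?thesis
  proof (cases "p = \<infinity>")
    case True
    have "Mod \<mu> p {} \<le> esssup \<mu> (\<lambda>_. 0)"
      unfolding Mod_def if_P[OF True] by (rule INF_lower) (simp add: adm)
    also have "\<dots> \<le> 0"
    proof -
      have "Limsup (ae_filter \<mu>) (\<lambda>_. 0 :: ennreal) \<le> 0" by (rule Limsup_bounded) simp
      then show ?thesis by (simp add: esssup_def)
    qed
    finally show ?thesis by simp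
  next
    case False
    have "Mod \<mu> p {} \<le> (\<integral>\<^sup>+ x. ennpow ((\<lambda>_. 0) x) (enn2real p) \<partial>\<mu>)"
      unfolding Mod_def if_not_P[OF False] by (rule INF_lower) (simp add: adm)
    also have "\<dots> = 0" by (simp add: ennpow_def)
    finally show ?thesis by simp
  qed
qed

lemma INF_le_ess_length:
  "Mod \<mu> p \<Gamma>0 = 0 \<Longrightarrow> (INF \<gamma> \<in> \<Gamma> - \<Gamma>0. curve_length \<gamma>) \<le> ess_length \<mu> p \<Gamma>"
  unfolding ess_length_def by (rule SUP_upper) auto

lemma ess_length_leI:
  "(\<And>\<Gamma>0. Mod \<mu> p \<Gamma>0 = 0 \<Longrightarrow> (INF \<gamma> \<in> \<Gamma> - \<Gamma>0. curve_length \<gamma>) \<le> c) \<Longrightarrow> ess_length \<mu> p \<Gamma> \<le> c"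
  unfolding ess_length_def by (rule SUP_least) auto

lemma lip_curves_rectifiable:
  assumes "\<gamma> \<in> lip_curves E F"
  shows "path \<gamma>" "curve_length \<gamma> < \<infinity>"
proof -
  obtain K where K: "K-lipschitz_on {0..1} \<gamma>" using assms by (auto simp: lip_curves_def)
  then show "path \<gamma>" unfolding path_def by (rule lipschitz_on_continuous_on)
  have "curve_length \<gamma> \<le> ennreal (K * (1 - 0))"
    unfolding curve_length_def using K by (rule length_on_lipschitz)
  then show "curve_length \<gamma> < \<infinity>" using le_less_trans[OF _ ennreal_less_top] by simp
qed

lemma reversepath_lip_curves:
  assumes "\<gamma> \<in> lip_curves E F"
  shows "reversepath \<gamma> \<in> lip_curves F E"
proof -
  obtain K where K: "K-lipschitz_on {0..1} \<gamma>" and ends: "\<gamma> 0 \<in> E" "\<gamma> 1 \<in> F"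
    using assms by (auto simp: lip_curves_def)
  have "1-lipschitz_on {0..1} (\<lambda>t::real. 1 - t)"
    by (rule lipschitz_onI) (auto simp: dist_real_def)
  moreover have "K-lipschitz_on ((\<lambda>t. 1 - t) ` {0..1}) \<gamma>"
    by (rule lipschitz_on_subset[OF K]) auto
  ultimately have "(K * 1)-lipschitz_on {0..1} (reversepath \<gamma>)"
    unfolding reversepath_o by (rule lipschitz_on_compose)
  then show ?thesis using ends unfolding lip_curves_def by (auto simp: reversepath_def)
qed

lemma ess_length_lip_curves_le_commute:
  "ess_length \<mu> p (lip_curves E F) \<le> ess_length \<mu> p (lip_curves F E)"
proof (rule ess_length_leI)
  fix \<Gamma>0 assume null: "Mod \<mu> p \<Gamma>0 = 0"
  define \<Gamma>1 where "\<Gamma>1 = reversepath ` (\<Gamma>0 \<inter> lip_curves E F)"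
  have "Mod \<mu> p \<Gamma>1 \<le> Mod \<mu> p \<Gamma>0"
  proof (rule Mod_mono_minorized)
    fix \<gamma>' assume "\<gamma>' \<in> \<Gamma>1"
    then obtain \<gamma> where "\<gamma> \<in> \<Gamma>0" "\<gamma> \<in> lip_curves E F" "\<gamma>' = reversepath \<gamma>"
      by (auto simp: \<Gamma>1_def)
    moreover have "line_integral \<rho> \<gamma>' = line_integral \<rho> \<gamma>" if "\<rho> \<in> borel_measurable borel" for \<rho>
      unfolding \<open>\<gamma>' = reversepath \<gamma>\<close>
      using lip_curves_rectifiable[OF \<open>\<gamma> \<in> lip_curves E F\<close>] that by (rule line_integral_reversepath)
    ultimately show "\<exists>\<beta>\<in>\<Gamma>0. \<forall>\<rho>\<in>borel_measurable borel. line_integral \<rho> \<beta> \<le> line_integral \<rho> \<gamma>'"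
      by auto
  qed
  then have null1: "Mod \<mu> p \<Gamma>1 = 0" using null by simp
  have "(INF \<gamma> \<in> lip_curves E F - \<Gamma>0. curve_length \<gamma>) \<le> (INF \<gamma> \<in> lip_curves F E - \<Gamma>1. curve_length \<gamma>)"
  proof (rule INF_greatest)
    fix \<gamma>' assume \<gamma>': "\<gamma>' \<in> lip_curves F E - \<Gamma>1"
    have "reversepath \<gamma>' \<notin> \<Gamma>0"
    proof
      assume "reversepath \<gamma>' \<in> \<Gamma>0"
      then have "reversepath (reversepath \<gamma>') \<in> \<Gamma>1"
        using reversepath_lip_curves[of \<gamma>' F E] \<gamma>' unfolding \<Gamma>1_def by blast
      then show False using \<gamma>' by simp
    qed
    then have "reversepath \<gamma>' \<in> lip_curves E F - \<Gamma>0"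
      using reversepath_lip_curves[of \<gamma>' F E] \<gamma>' by blast
    then show "(INF \<gamma> \<in> lip_curves E F - \<Gamma>0. curve_length \<gamma>) \<le> curve_length \<gamma>'"
      using INF_lower[of "reversepath \<gamma>'" "lip_curves E F - \<Gamma>0" curve_length] by simp
  qed
  also have "\<dots> \<le> ess_length \<mu> p (lip_curves F E)" using null1 by (rule INF_le_ess_length)
  finally show "(INF \<gamma> \<in> lip_curves E F - \<Gamma>0. curve_length \<gamma>) \<le> ess_length \<mu> p (lip_curves F E)" .
qed

lemma ess_length_lip_curves_commute:
  "ess_length \<mu> p (lip_curves E F) = ess_length \<mu> p (lip_curves F E)"
  by (intro antisym ess_length_lip_curves_le_commute)

lemma ess_length_lip_curves_le_thick:
  assumes thick: "thick_quasiconvex \<mu> p C"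
    and E: "E \<in> sets (completion \<mu>)" "0 < emeasure (completion \<mu>) E"
    and F: "F \<in> sets (completion \<mu>)" "0 < emeasure (completion \<mu>) F"
    and B: "\<And>a b. a \<in> E \<Longrightarrow> b \<in> F \<Longrightarrow> C * dist a b \<le> B"
  shows "ess_length \<mu> p (lip_curves E F) \<le> ennreal B"
proof (rule ess_length_leI)
  fix \<Gamma>0 assume null: "Mod \<mu> p \<Gamma>0 = 0"
  show "(INF \<gamma> \<in> lip_curves E F - \<Gamma>0. curve_length \<gamma>) \<le> ennreal B"
  proof (rule ccontr)
    assume "\<not> ?thesis"
    then have short_in_\<Gamma>0: "\<beta> \<in> \<Gamma>0" if "\<beta> \<in> lip_curves E F" "curve_length \<beta> \<le> ennreal B" for \<beta>
      using that INF_lower[of \<beta> "lip_curves E F - \<Gamma>0" curve_length] by force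
    have "Mod \<mu> p (curvesC E F C) \<le> Mod \<mu> p \<Gamma>0"
    proof (rule Mod_mono_minorized)
      fix \<gamma> assume "\<gamma> \<in> curvesC E F C"
      then have \<gamma>: "path \<gamma>" "\<gamma> 0 \<in> E" "\<gamma> 1 \<in> F" "curve_length \<gamma> \<le> ennreal (C * dist (\<gamma> 0) (\<gamma> 1))"
        by (auto simp: curvesC_def path_def)
      then have short: "curve_length \<gamma> \<le> ennreal B"
        using B[of "\<gamma> 0" "\<gamma> 1"] by (meson ennreal_leI order_trans)
      then have "curve_length \<gamma> < \<infinity>" using le_less_trans[OF _ ennreal_less_top] by simp
      then obtain \<beta> where \<beta>: "(enn2real (curve_length \<gamma>))-lipschitz_on {0..1} \<beta>"
        "\<beta> 0 = \<gamma> 0" "\<beta> 1 = \<gamma> 1" "curve_length \<beta> = curve_length \<gamma>"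
        "\<And>\<rho>. \<rho> \<in> borel_measurable borel \<Longrightarrow> line_integral \<rho> \<beta> = line_integral \<rho> \<gamma>"
        using arc_length_reparametrization[OF \<gamma>(1)] by blast
      have "\<beta> \<in> lip_curves E F" using \<beta>(1-3) \<gamma>(2,3) by (auto simp: lip_curves_def)
      then have "\<beta> \<in> \<Gamma>0" using short \<beta>(4) by (intro short_in_\<Gamma>0) simp_all
      moreover have "\<forall>\<rho>\<in>borel_measurable borel. line_integral \<rho> \<beta> \<le> line_integral \<rho> \<gamma>"
        using \<beta>(5) by simp
      ultimately show "\<exists>\<beta>\<in>\<Gamma>0. \<forall>\<rho>\<in>borel_measurable borel. line_integral \<rho> \<beta> \<le> line_integral \<rho> \<gamma>"
        by blast
    qed
    moreover have "0 < Mod \<mu> p (curvesC E F C)"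
      using thick E F unfolding thick_quasiconvex_def by blast
    ultimately show False using null by simp
  qed
qed

lemma completion_cball_pos:
  assumes borel: "sets \<mu> = sets borel" and balls_pos: "\<And>x r. 0 < r \<Longrightarrow> 0 < emeasure \<mu> (ball x r)"
    and r: "0 < r"
  shows "cball x r \<in> sets (completion \<mu>)" "0 < emeasure (completion \<mu>) (cball x r)"
proof -
  have cball: "cball x r \<in> sets \<mu>" using borel by simp
  then show "cball x r \<in> sets (completion \<mu>)" by simp
  have "emeasure \<mu> (ball x r) \<le> emeasure \<mu> (cball x r)"
    using cball by (intro emeasure_mono) auto
  then show "0 < emeasure (completion \<mu>) (cball x r)"
    using balls_pos[OF r, of x] cball by simp
qed

section \<open>The distances \<open>d\<^sub>p'\<close> and \<open>d\<^sub>p\<close>\<close>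

lemma tendsto_at_right_SUP_antimono:
  fixes e :: "real \<Rightarrow> 'a::{complete_linorder, linorder_topology}"
  assumes antimono: "\<And>a b. 0 < a \<Longrightarrow> a \<le> b \<Longrightarrow> e b \<le> e a"
  shows "(e \<longlongrightarrow> (SUP \<delta> \<in> {0<..}. e \<delta>)) (at_right 0)"
proof (rule order_tendstoI)
  fix y assume "y < (SUP \<delta> \<in> {0<..}. e \<delta>)"
  then obtain \<delta>0 where \<delta>0: "0 < \<delta>0" "y < e \<delta>0" by (auto simp: less_SUP_iff)
  show "\<forall>\<^sub>F \<delta> in at_right 0. y < e \<delta>"
    using eventually_at_right_real[OF \<delta>0(1)]
    by eventually_elim (use \<delta>0 antimono in \<open>auto intro: less_le_trans\<close>)
next
  fix y assume y: "(SUP \<delta> \<in> {0<..}. e \<delta>) < y"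
  show "\<forall>\<^sub>F \<delta> in at_right 0. e \<delta> < y"
    using eventually_at_right_less[of "0::real"]
    by eventually_elim (use y in \<open>auto intro: le_less_trans[OF SUP_upper]\<close>)
qed

lemma tendsto_dp':
  "((\<lambda>\<delta>. ess_length \<mu> p (lip_curves (cball x \<delta>) (cball y \<delta>))) \<longlongrightarrow> dp' \<mu> p x y) (at_right 0)"
proof -
  let ?e = "\<lambda>\<delta>. ess_length \<mu> p (lip_curves (cball x \<delta>) (cball y \<delta>))"
  have "?e b \<le> ?e a" if "a \<le> b" for a b :: real
    unfolding ess_length_def using that
    by (intro SUP_mono) (auto intro!: INF_superset_mono simp: lip_curves_def)
  then have "(?e \<longlongrightarrow> (SUP \<delta> \<in> {0<..}. ?e \<delta>)) (at_right 0)"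
    by (intro tendsto_at_right_SUP_antimono)
  moreover from this have "dp' \<mu> p x y = (SUP \<delta> \<in> {0<..}. ?e \<delta>)"
    unfolding dp'_def by (intro tendsto_Lim) simp_all
  ultimately show ?thesis by simp
qed

lemma dp'_commute: "dp' \<mu> p x y = dp' \<mu> p y x"
  unfolding dp'_def by (subst ess_length_lip_curves_commute) (rule refl)

lemma dist_le_dp': "ennreal (dist x y) \<le> dp' \<mu> p x y"
proof (rule tendsto_le[OF trivial_limit_at_right_real tendsto_dp'])
  show "((\<lambda>\<delta>. ennreal (dist x y - 2 * \<delta>)) \<longlongrightarrow> ennreal (dist x y)) (at_right 0)"
    by (auto intro!: tendsto_eq_intros)
  show "\<forall>\<^sub>F \<delta> in at_right 0.
      ennreal (dist x y - 2 * \<delta>) \<le> ess_length \<mu> p (lip_curves (cball x \<delta>) (cball y \<delta>))"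
  proof (rule always_eventually, intro allI)
    fix \<delta> :: real
    have "ennreal (dist x y - 2 * \<delta>) \<le> curve_length \<gamma>" if "\<gamma> \<in> lip_curves (cball x \<delta>) (cball y \<delta>)" for \<gamma>
    proof -
      have "dist x y - 2 * \<delta> \<le> dist (\<gamma> 0) (\<gamma> 1)"
        using that dist_triangle[of x y "\<gamma> 0"] dist_triangle[of "\<gamma> 0" y "\<gamma> 1"]
        by (auto simp: lip_curves_def dist_commute)
      then have "ennreal (dist x y - 2 * \<delta>) \<le> ennreal (dist (\<gamma> 0) (\<gamma> 1))" by (rule ennreal_leI)
      also have "\<dots> \<le> curve_length \<gamma>" unfolding curve_length_def by (rule dist_le_length_on) auto
      finally show ?thesis .
    qed
    then have "ennreal (dist x y - 2 * \<delta>) \<le> (INF \<gamma> \<in> lip_curves (cball x \<delta>) (cball y \<delta>) - {}. curve_length \<gamma>)"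
      by (auto intro: INF_greatest)
    also have "\<dots> \<le> ess_length \<mu> p (lip_curves (cball x \<delta>) (cball y \<delta>))"
      by (rule INF_le_ess_length) simp
    finally show "ennreal (dist x y - 2 * \<delta>) \<le> ess_length \<mu> p (lip_curves (cball x \<delta>) (cball y \<delta>))" .
  qed
qed

lemma dp'_le_dist:
  assumes borel: "sets \<mu> = sets borel" and balls_pos: "\<And>x r. 0 < r \<Longrightarrow> 0 < emeasure \<mu> (ball x r)"
    and C: "0 \<le> C" and thick: "thick_quasiconvex \<mu> p C"
  shows "dp' \<mu> p x y \<le> ennreal (C * dist x y)"
proof (rule tendsto_le[OF trivial_limit_at_right_real _ tendsto_dp'])
  show "((\<lambda>\<delta>. ennreal (C * (dist x y + 2 * \<delta>))) \<longlongrightarrow> ennreal (C * dist x y)) (at_right 0)"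
    by (auto intro!: tendsto_eq_intros)
  show "\<forall>\<^sub>F \<delta> in at_right 0.
      ess_length \<mu> p (lip_curves (cball x \<delta>) (cball y \<delta>)) \<le> ennreal (C * (dist x y + 2 * \<delta>))"
    using eventually_at_right_less[of "0::real"]
  proof eventually_elim
    case (elim \<delta>)
    show ?case
    proof (rule ess_length_lip_curves_le_thick[OF thick])
      show "cball x \<delta> \<in> sets (completion \<mu>)" "0 < emeasure (completion \<mu>) (cball x \<delta>)"
        "cball y \<delta> \<in> sets (completion \<mu>)" "0 < emeasure (completion \<mu>) (cball y \<delta>)"
        using completion_cball_pos[OF borel balls_pos elim] by auto
      show "C * dist a b \<le> C * (dist x y + 2 * \<delta>)" if "a \<in> cball x \<delta>" "b \<in> cball y \<delta>" for a b
        using that C dist_triangle[of a b x] dist_triangle[of x b y]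
        by (intro mult_left_mono) (auto simp: dist_commute)
    qed
  qed
qed

lemma dp_eq_chain_inf: "dp \<mu> p = chain_inf (dp' \<mu> p)"
  unfolding dp_def chain_inf_def chains_def sum_consecutive_eq_chain_sum ..

theorem lemma5p8:
  fixes \<mu> :: "'a::metric_space measure" and p :: ennreal and C :: real
  assumes proper: "\<And>(x::'a) r. compact (cball x r)"
    and borel: "sets \<mu> = sets borel"
    and balls_pos: "\<And>x r. 0 < r \<Longrightarrow> 0 < emeasure \<mu> (ball x r)"
    and balls_fin: "\<And>x r. 0 < r \<Longrightarrow> emeasure \<mu> (ball x r) < \<infinity>"
    and p: "1 \<le> p"
    and C: "1 \<le> C"
    and thick: "thick_quasiconvex \<mu> p C"
  shows "(\<forall>x y. dp \<mu> p x y \<noteq> \<infinity>)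
       \<and> Metric_space UNIV (\<lambda>x y. enn2real (dp \<mu> p x y))
       \<and> (\<forall>x y. ennreal (dist x y) \<le> dp \<mu> p x y \<and> dp \<mu> p x y \<le> ennreal (C * dist x y))"
proof -
  have dp'_le: "dp' \<mu> p x y \<le> ennreal (C * dist x y)" for x y
    by (rule dp'_le_dist[OF borel _ _ thick]) (use balls_pos C in auto)
  have upper: "dp \<mu> p x y \<le> ennreal (C * dist x y)" for x y
    unfolding dp_eq_chain_inf using chain_inf_le dp'_le by (rule order_trans)
  have lower: "ennreal (dist x y) \<le> dp \<mu> p x y" for x y
    unfolding dp_eq_chain_inf using dist_le_dp' by (rule dist_le_chain_inf)
  have finite: "dp \<mu> p x y \<noteq> \<infinity>" for x y
    using upper[of x y] by (auto simp: top_unique)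
  have "Metric_space UNIV (\<lambda>x y. enn2real (dp \<mu> p x y))"
  proof (rule Metric_space_enn2real[OF finite])
    show "dp \<mu> p x y = 0 \<longleftrightarrow> x = y" for x y
      using lower[of x y] upper[of x y] by auto
    show "dp \<mu> p x y = dp \<mu> p y x" for x y
      unfolding dp_eq_chain_inf by (rule chain_inf_commute) (rule dp'_commute)
    show "dp \<mu> p x z \<le> dp \<mu> p x y + dp \<mu> p y z" for x y z
      unfolding dp_eq_chain_inf by (rule chain_inf_triangle)
  qed
  then show ?thesis using finite lower upper by blast
qed

end
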